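(* Let $\Theta_k$ ($k$ in a topological parameter set) be a uniform family of nuclear contracting Dwork operators on $M^*$. Then the family of Fredholm determinants $\det(I-T\Theta_k|M^* )$ is a family of uniformly entire functions. If, in addition, the family $\Theta_k$ is uniformly continuous in $k$, then $\det(I-T\Theta_k|M^* )$ is a uniformly continuous family of uniformly entire functions, and $$\|\det(I-T\Theta_{k_1}|M^* )-\det(I-T\Theta_{k_2}|M^* )\|\le\|\Theta_{k_1}-\Theta_{k_2}\|.$$
   Context: $R$ is a complete discrete valuation ring of characteristic $0$ with uniformizer $\pi$, residue field $\mathbf{F}_q$, fraction field $K$, valuation $\mathrm{ord}_\pi$, $|a|_\pi=p^{-\mathrm{ord}_\pi a}$. Fix $n\ge1$; $X^u=\prod X_i^{u_i}$, $|u|=\sum u_i$. $A_0=\{\sum a_uX^u:a_u\in R,\ |a_u|_\pi\to0\}$ with Gauss norm $\|\cdot\|$, $A=\{\sum a_uX^u\in A_0:\liminf_{|u|\to\infty}\mathrm{ord}_\pi a_u/|u|>0\}$. $\sigma$ is an $R$-algebra endomorphism of $A_0$ with $\sigma(X_i)=X_i^q+\pi f_i$, $f_i\in A$. $L(b,c)=\{\sum a_vX^v:\mathrm{ord}_\pi a_v\ge b|v|+c\}$; $b_\sigma>0$ is a fixed rational with $\pi f_i\in L(b_\sigma,0)$. $M^*=\{\sum_ja_je_j^*:a_j\in A_0,\|a_j\|\to0\}$ (countable index set), $M^*(b,c)=\{\sum a_je_j^*\in M^*:a_j\in L(b,c)\}$. A Dwork operator on $M^*$ is a continuous $R$-linear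 $\Theta$ with $\Theta(\sigma(a)f)=a\Theta(f)$; its norm is $\|\Theta\|=p^{-i}$ with $i$ the largest integer $\ge0$ such that $\Theta(M^* )\subset\pi^iM^*$. Nuclear: writing $\Theta(X^ve_{j_2}^* )=\sum G^*_{\{u,j_1\},\{v,j_2\}}X^ue_{j_1}^*$, for fixed $u,v$, $\lim_{j_1}\inf_{j_2}\mathrm{ord}_\pi G^*=\infty$. Contracting: $\Theta(M^*(b,c))\subset M^*(qb,c+c_1)$ for some rationals $b>0,c,c_1$. Fredholm determinant: for such $b$ with $0<b\le b_\sigma$ (an integer after a totally ramified extension of $R$), $\det(I-T\Theta|M^* )=\det(I-TG)$ where $G$ is the matrix of $\Theta$ on $M^*(b,0)\otimes K$ w.r.t. $\{\pi^{b|u|}X^ue_j^*\}$; it is entire and independent of $b$. A family $\Theta_k$ is uniform if (i) with $\Theta_k(X^ve_{j_2}^* )=\sum G^*_{\{u,j_1\},\{v,j_2\}}(k)X^ue_{j_1}^*$, for fixed $u,v$, $\lim_{j_1\to\infty}\inf_{j_2,k}\mathrm{ord}_\pi G^*_{\{u,j_1\},\{v,j_2\}}(k)=\infty$, and (ii) $\Theta_k(M^*(b,c))\subset M^*(qb,c+c_1)$ with $b>0,c,c_1$ independent of $k$. It is uniformly continuous if $\|\Theta_{k_1}-\Theta_{k_2}\|$ is uniformly small whenever $k_1,k_2$ are close. A family $f(k,T)=\sum_mf_m(k)T^m$ ($f_0=1$, $f_m(k)\in R$) is uniformly entire if $\liminf_m\inf_k\mathrm{ord}_\pi f_m(k)/m=\infty$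 and uniformly continuous if $\|f(k_1,T)-f(k_2,T)\|=\max_m|f_m(k_1)-f_m(k_2)|_\pi$ is uniformly small when $k_1,k_2$ are close. *)

theory Defs
  imports Complex_Main "HOL-Library.Extended_Real" "HOL-Combinatorics.Permutations"
          "HOL-Library.Countable" "HOL-Computational_Algebra.Primes"
begin

text \<open>R is the set of elements with nonnegative valuation.\<close>

definition dv_field :: "('k::field_char_0 \<Rightarrow> ereal) \<Rightarrow> 'k \<Rightarrow> bool" where
  "dv_field v \<pi> \<longleftrightarrow>
     (\<forall>x. v x = \<infinity> \<longleftrightarrow> x = 0) \<and>
     (\<forall>x. x \<noteq> 0 \<longrightarrow> (\<exists>z::int. v x = ereal (of_int z))) \<and>
     (\<forall>x y. v (x * y) = v x + v y) \<and>
     (\<forall>x y. min (v x) (v y) \<le> v (x + y)) \<and>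
     v \<pi> = 1 \<and>
     (\<forall>s::nat \<Rightarrow> 'k.
        (\<forall>N::int. \<exists>M. \<forall>m\<ge>M. \<forall>m'\<ge>M. ereal (of_int N) \<le> v (s m - s m')) \<longrightarrow>
        (\<exists>L. \<forall>N::int. \<exists>M. \<forall>m\<ge>M. ereal (of_int N) \<le> v (s m - L)))"

text \<open>Residue field R / pi R has exactly q elements.\<close>
definition residue_card :: "('k::field_char_0 \<Rightarrow> ereal) \<Rightarrow> nat \<Rightarrow> bool" where
  "residue_card v q \<longleftrightarrow>
     (let Rr = {x. 0 \<le> v x}; rel = {(x,y). x \<in> Rr \<and> y \<in> Rr \<and> 1 \<le> v (x - y)}
      in finite (Rr // rel) \<and> card (Rr // rel) = q)"

definition MI :: "nat \<Rightarrow> (nat \<Rightarrow> nat) set" where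
  "MI n = {u. \<forall>i\<ge>n. u i = 0}"

definition deg :: "nat \<Rightarrow> (nat \<Rightarrow> nat) \<Rightarrow> nat" where
  "deg n u = (\<Sum>i<n. u i)"

text \<open>Power series are coefficient functions u \<mapsto> a_u.\<close>
definition A0 :: "('k::field_char_0 \<Rightarrow> ereal) \<Rightarrow> nat \<Rightarrow> ((nat \<Rightarrow> nat) \<Rightarrow> 'k) set" where
  "A0 v n = {a. (\<forall>u. u \<notin> MI n \<longrightarrow> a u = 0) \<and> (\<forall>u. 0 \<le> v (a u)) \<and>
                (\<forall>N::int. finite {u. v (a u) < ereal (of_int N)})}"

definition Aset :: "('k::field_char_0 \<Rightarrow> ereal) \<Rightarrow> nat \<Rightarrow> ((nat \<Rightarrow> nat) \<Rightarrow> 'k) set" where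
  "Aset v n = {a \<in> A0 v n. \<exists>\<epsilon>::real. \<epsilon> > 0 \<and>
      (\<exists>M. \<forall>u\<in>MI n. M \<le> deg n u \<longrightarrow> ereal (\<epsilon> * real (deg n u)) \<le> v (a u))}"

definition Lset :: "('k::field_char_0 \<Rightarrow> ereal) \<Rightarrow> nat \<Rightarrow> real \<Rightarrow> real \<Rightarrow> ((nat \<Rightarrow> nat) \<Rightarrow> 'k) set" where
  "Lset v n b c = {a. \<forall>u\<in>MI n. ereal (b * real (deg n u) + c) \<le> v (a u)}"

definition mono :: "(nat \<Rightarrow> nat) \<Rightarrow> (nat \<Rightarrow> nat) \<Rightarrow> 'k::field_char_0" where
  "mono u = (\<lambda>w. if w = u then 1 else 0)"

definition unitvec :: "nat \<Rightarrow> nat \<Rightarrow> nat" where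
  "unitvec i = (\<lambda>l. if l = i then 1 else 0)"

definition ps_mult :: "nat \<Rightarrow> ((nat \<Rightarrow> nat) \<Rightarrow> 'k::field_char_0) \<Rightarrow> ((nat \<Rightarrow> nat) \<Rightarrow> 'k) \<Rightarrow> (nat \<Rightarrow> nat) \<Rightarrow> 'k" where
  "ps_mult n a b u = (if u \<in> MI n then
      (\<Sum>w\<in>{w \<in> MI n. \<forall>i. w i \<le> u i}. a w * b (\<lambda>i. u i - w i)) else 0)"

text \<open>Elements of M^* are coefficient functions (u,j) \<mapsto> coefficient of X^u e_j^*.\<close>
definition Mstar :: "('k::field_char_0 \<Rightarrow> ereal) \<Rightarrow> nat \<Rightarrow> ((nat \<Rightarrow> nat) \<times> 'j \<Rightarrow> 'k) set" where
  "Mstar v n = {f. (\<forall>u j. u \<notin> MI n \<longrightarrow> f (u, j) = 0) \<and> (\<forall>x. 0 \<le> v (f x)) \<and>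
                   (\<forall>N::int. finite {x. v (f x) < ereal (of_int N)})}"

definition Mstar_bc :: "('k::field_char_0 \<Rightarrow> ereal) \<Rightarrow> nat \<Rightarrow> real \<Rightarrow> real \<Rightarrow> ((nat \<Rightarrow> nat) \<times> 'j \<Rightarrow> 'k) set" where
  "Mstar_bc v n b c = {f \<in> Mstar v n. \<forall>u\<in>MI n. \<forall>j. ereal (b * real (deg n u) + c) \<le> v (f (u, j))}"

definition act :: "nat \<Rightarrow> ((nat \<Rightarrow> nat) \<Rightarrow> 'k::field_char_0) \<Rightarrow> ((nat \<Rightarrow> nat) \<times> 'j \<Rightarrow> 'k) \<Rightarrow> ((nat \<Rightarrow> nat) \<times> 'j \<Rightarrow> 'k)" where
  "act n a f = (\<lambda>(u, j). ps_mult n a (\<lambda>w. f (w, j)) u)"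

definition frob_lift :: "('k::field_char_0 \<Rightarrow> ereal) \<Rightarrow> 'k \<Rightarrow> nat \<Rightarrow> nat \<Rightarrow>
     (((nat \<Rightarrow> nat) \<Rightarrow> 'k) \<Rightarrow> ((nat \<Rightarrow> nat) \<Rightarrow> 'k)) \<Rightarrow> bool" where
  "frob_lift v \<pi> n q \<sigma> \<longleftrightarrow>
     (\<forall>a\<in>A0 v n. \<sigma> a \<in> A0 v n) \<and>
     (\<forall>a\<in>A0 v n. \<forall>b\<in>A0 v n. \<sigma> (\<lambda>u. a u + b u) = (\<lambda>u. \<sigma> a u + \<sigma> b u)) \<and>
     (\<forall>a\<in>A0 v n. \<forall>b\<in>A0 v n. \<sigma> (ps_mult n a b) = ps_mult n (\<sigma> a) (\<sigma> b)) \<and>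
     (\<forall>r a. 0 \<le> v r \<longrightarrow> a \<in> A0 v n \<longrightarrow> \<sigma> (\<lambda>u. r * a u) = (\<lambda>u. r * \<sigma> a u)) \<and>
     \<sigma> (mono (\<lambda>_. 0)) = mono (\<lambda>_. 0) \<and>
     (\<exists>f :: nat \<Rightarrow> (nat \<Rightarrow> nat) \<Rightarrow> 'k. \<exists>b\<sigma>::rat. b\<sigma> > 0 \<and>
        (\<forall>i<n. f i \<in> Aset v n \<and>
               (\<lambda>u. \<pi> * f i u) \<in> Lset v n (real_of_rat b\<sigma>) 0 \<and>
               \<sigma> (mono (unitvec i)) = (\<lambda>u. mono (\<lambda>l. q * unitvec i l) u + \<pi> * f i u)))"

type_synonym ('j, 'k) op = "((nat \<Rightarrow> nat) \<times> 'j \<Rightarrow> 'k) \<Rightarrow> ((nat \<Rightarrow> nat) \<times> 'j \<Rightarrow> 'k)"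

definition dwork_op :: "('k::field_char_0 \<Rightarrow> ereal) \<Rightarrow> nat \<Rightarrow>
     (((nat \<Rightarrow> nat) \<Rightarrow> 'k) \<Rightarrow> ((nat \<Rightarrow> nat) \<Rightarrow> 'k)) \<Rightarrow> ('j, 'k) op \<Rightarrow> bool" where
  "dwork_op v n \<sigma> \<Theta> \<longleftrightarrow>
     (\<forall>f\<in>Mstar v n. \<Theta> f \<in> Mstar v n) \<and>
     (\<forall>f\<in>Mstar v n. \<forall>g\<in>Mstar v n. \<Theta> (\<lambda>x. f x + g x) = (\<lambda>x. \<Theta> f x + \<Theta> g x)) \<and>
     (\<forall>r. \<forall>f\<in>Mstar v n. 0 \<le> v r \<longrightarrow> \<Theta> (\<lambda>x. r * f x) = (\<lambda>x. r * \<Theta> f x)) \<and>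
     (\<forall>N::int. \<exists>N'::int. \<forall>f\<in>Mstar v n.
        (\<forall>x. ereal (of_int N') \<le> v (f x)) \<longrightarrow> (\<forall>x. ereal (of_int N) \<le> v (\<Theta> f x))) \<and>
     (\<forall>a\<in>A0 v n. \<forall>f\<in>Mstar v n. \<Theta> (act n (\<sigma> a) f) = act n a (\<Theta> f))"

definition basis :: "(nat \<Rightarrow> nat) \<times> 'j \<Rightarrow> ((nat \<Rightarrow> nat) \<times> 'j \<Rightarrow> 'k::field_char_0)" where
  "basis y = (\<lambda>x. if x = y then 1 else 0)"

text \<open>Matrix entries G^*_{x,y}: coefficient of basis vector x in Theta(basis vector y).\<close>
definition gstar :: "('j, 'k::field_char_0) op \<Rightarrow> (nat \<Rightarrow> nat) \<times> 'j \<Rightarrow> (nat \<Rightarrow> nat) \<times> 'j \<Rightarrow> 'k" where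
  "gstar \<Theta> x y = \<Theta> (basis y) x"

definition nuclear :: "('k::field_char_0 \<Rightarrow> ereal) \<Rightarrow> nat \<Rightarrow> ('j, 'k) op \<Rightarrow> bool" where
  "nuclear v n \<Theta> \<longleftrightarrow> (\<forall>u\<in>MI n. \<forall>w\<in>MI n. \<forall>N::int.
      finite {j1. \<exists>j2. v (gstar \<Theta> (u, j1) (w, j2)) < ereal (of_int N)})"

definition contracting :: "('k::field_char_0 \<Rightarrow> ereal) \<Rightarrow> nat \<Rightarrow> nat \<Rightarrow> ('j, 'k) op \<Rightarrow> bool" where
  "contracting v n q \<Theta> \<longleftrightarrow> (\<exists>b c c1 :: rat. b > 0 \<and>
      (\<forall>f \<in> Mstar_bc v n (real_of_rat b) (real_of_rat c).
          \<Theta> f \<in> Mstar_bc v n (real q * real_of_rat b) (real_of_rat c + real_of_rat c1)))"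

definition uniform_family :: "('k::field_char_0 \<Rightarrow> ereal) \<Rightarrow> nat \<Rightarrow> nat \<Rightarrow> ('a \<Rightarrow> ('j, 'k) op) \<Rightarrow> bool" where
  "uniform_family v n q \<Theta> \<longleftrightarrow>
     (\<forall>u\<in>MI n. \<forall>w\<in>MI n. \<forall>N::int.
        finite {j1. \<exists>j2 k. v (gstar (\<Theta> k) (u, j1) (w, j2)) < ereal (of_int N)}) \<and>
     (\<exists>b c c1 :: rat. b > 0 \<and> (\<forall>k. \<forall>f \<in> Mstar_bc v n (real_of_rat b) (real_of_rat c).
          \<Theta> k f \<in> Mstar_bc v n (real q * real_of_rat b) (real_of_rat c + real_of_rat c1)))"

definition pminor :: "('i \<Rightarrow> 'i \<Rightarrow> 'k::field_char_0) \<Rightarrow> 'i set \<Rightarrow> 'k" where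
  "pminor G S = (\<Sum>p\<in>{p. p permutes S}. of_int (sign p) * (\<Prod>x\<in>S. G x (p x)))"

definition has_vsum :: "('k::field_char_0 \<Rightarrow> ereal) \<Rightarrow> ('s \<Rightarrow> 'k) \<Rightarrow> 's set \<Rightarrow> 'k \<Rightarrow> bool" where
  "has_vsum v g A L \<longleftrightarrow> (\<forall>N::int. \<exists>F0. finite F0 \<and> F0 \<subseteq> A \<and>
      (\<forall>F. finite F \<and> F0 \<subseteq> F \<and> F \<subseteq> A \<longrightarrow> ereal (of_int N) \<le> v ((\<Sum>S\<in>F. g S) - L)))"

definition minor_sets :: "nat \<Rightarrow> nat \<Rightarrow> ((nat \<Rightarrow> nat) \<times> 'j) set set" where
  "minor_sets n m = {S. S \<subseteq> MI n \<times> UNIV \<and> finite S \<and> card S = m}"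

text \<open>det(I - T Theta | M^*) = sum_m (-1)^m (sum_{|S|=m} det G_S) T^m.
  (Principal minors are unchanged by the diagonal rescaling to the basis pi^{b|u|} X^u e_j^*.)\<close>
definition fred_exists :: "('k::field_char_0 \<Rightarrow> ereal) \<Rightarrow> nat \<Rightarrow> ('j, 'k) op \<Rightarrow> bool" where
  "fred_exists v n \<Theta> \<longleftrightarrow> (\<forall>m. \<exists>L. has_vsum v (pminor (gstar \<Theta>)) (minor_sets n m) L)"

definition fred_coeff :: "('k::field_char_0 \<Rightarrow> ereal) \<Rightarrow> nat \<Rightarrow> ('j, 'k) op \<Rightarrow> nat \<Rightarrow> 'k" where
  "fred_coeff v n \<Theta> m = (-1) ^ m * (THE L. has_vsum v (pminor (gstar \<Theta>)) (minor_sets n m) L)"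

definition unif_entire :: "('k::field_char_0 \<Rightarrow> ereal) \<Rightarrow> ('a \<Rightarrow> nat \<Rightarrow> 'k) \<Rightarrow> bool" where
  "unif_entire v F \<longleftrightarrow> (\<forall>k. F k 0 = 1) \<and> (\<forall>k m. 0 \<le> v (F k m)) \<and>
     (\<forall>N::real. \<exists>M. \<forall>m\<ge>M. \<forall>k. ereal (N * real m) \<le> v (F k m))"

definition absv :: "('k::field_char_0 \<Rightarrow> ereal) \<Rightarrow> nat \<Rightarrow> 'k \<Rightarrow> real" where
  "absv v p x = (if x = 0 then 0 else real p powr (- real_of_ereal (v x)))"

definition ser_norm :: "('k::field_char_0 \<Rightarrow> ereal) \<Rightarrow> nat \<Rightarrow> (nat \<Rightarrow> 'k) \<Rightarrow> (nat \<Rightarrow> 'k) \<Rightarrow> real" where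
  "ser_norm v p f g = (SUP m. absv v p (f m - g m))"

definition op_norm :: "('k::field_char_0 \<Rightarrow> ereal) \<Rightarrow> 'k \<Rightarrow> nat \<Rightarrow> nat \<Rightarrow> ('j, 'k) op \<Rightarrow> real" where
  "op_norm v \<pi> p n \<Theta> = (if \<forall>f\<in>Mstar v n. \<Theta> f = (\<lambda>_. 0) then 0
     else real p powr (- real (GREATEST i::nat. \<forall>f\<in>Mstar v n. \<exists>h\<in>Mstar v n. \<Theta> f = (\<lambda>x. \<pi> ^ i * h x))))"

definition op_diff :: "('j, 'k::field_char_0) op \<Rightarrow> ('j, 'k) op \<Rightarrow> ('j, 'k) op" where
  "op_diff \<Theta>1 \<Theta>2 = (\<lambda>f x. \<Theta>1 f x - \<Theta>2 f x)"

definition unif_cont_ops :: "('k::field_char_0 \<Rightarrow> ereal) \<Rightarrow> 'k \<Rightarrow> nat \<Rightarrow> nat \<Rightarrow> ('a::uniform_space \<Rightarrow> ('j, 'k) op) \<Rightarrow> bool" where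
  "unif_cont_ops v \<pi> p n \<Theta> \<longleftrightarrow> (\<forall>\<epsilon>>0. eventually (\<lambda>(k1, k2).
      op_norm v \<pi> p n (op_diff (\<Theta> k1) (\<Theta> k2)) < \<epsilon>) uniformity)"

definition unif_cont_series :: "('k::field_char_0 \<Rightarrow> ereal) \<Rightarrow> nat \<Rightarrow> ('a::uniform_space \<Rightarrow> nat \<Rightarrow> 'k) \<Rightarrow> bool" where
  "unif_cont_series v p F \<longleftrightarrow> (\<forall>\<epsilon>>0. eventually (\<lambda>(k1, k2).
      ser_norm v p (F k1) (F k2) < \<epsilon>) uniformity)"

end

theory Submission
  imports Defs
begin

text \<open>The coefficient of \<open>T\<^sup>m\<close> in \<open>det(I - T \<Theta>)\<close> is, up to sign, the \<open>\<pi>\<close>-adically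
  convergent sum of the principal minors of size \<open>m\<close> of the matrix of \<open>\<Theta>\<close>. In the basis
  \<open>\<pi>\<^bsup>b|u|\<^esup> X\<^sup>u e\<^sub>j\<^sup>*\<close>, contraction gives the entries of row \<open>u\<close> valuation at least
  \<open>(q - 1) b |u| - D\<close>, and uniform nuclearity leaves, for every \<open>N\<close>, only finitely many rows,
  independently of \<open>k\<close>, containing an entry of valuation below \<open>N\<close>. A minor of size \<open>m\<close>
  therefore has valuation at least \<open>N m - (N + D) c\<^sub>N\<close>, where \<open>c\<^sub>N\<close> counts these
  exceptional rows; this yields convergence and coefficients whose valuations grow faster than any
  linear function of \<open>m\<close>, uniformly in \<open>k\<close>. If \<open>\<Theta>\<^sub>k\<^sub>1 - \<Theta>\<^sub>k\<^sub>2\<close> maps \<open>M*\<close> into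
  \<open>\<pi>\<^sup>i M*\<close>, the two matrices agree modulo \<open>\<pi>\<^sup>i\<close>, hence so do all minors and all
  coefficients: this is the norm inequality, and uniform continuity follows from it.\<close>

locale valued_field =
  fixes v :: "'k::field_char_0 \<Rightarrow> ereal" and \<pi> :: 'k
  assumes dv_field: "dv_field v \<pi>"
begin

lemma v_eq_infinity_iff: "v x = \<infinity> \<longleftrightarrow> x = 0"
  using dv_field unfolding dv_field_def by blast

lemma v_integral: "x \<noteq> 0 \<Longrightarrow> \<exists>z::int. v x = ereal (of_int z)"
  using dv_field unfolding dv_field_def by blast

lemma v_mult: "v (x * y) = v x + v y"
  using dv_field unfolding dv_field_def by blast

lemma v_add: "min (v x) (v y) \<le> v (x + y)"
  using dv_field unfolding dv_field_def by blast

lemma v_pi: "v \<pi> = 1"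
  using dv_field unfolding dv_field_def by blast

lemma v_complete:
  fixes s :: "nat \<Rightarrow> 'k"
  assumes "\<forall>N::int. \<exists>M. \<forall>m\<ge>M. \<forall>m'\<ge>M. ereal (of_int N) \<le> v (s m - s m')"
  shows "\<exists>L. \<forall>N::int. \<exists>M. \<forall>m\<ge>M. ereal (of_int N) \<le> v (s m - L)"
  using dv_field assms unfolding dv_field_def by blast

lemma v_zero [simp]: "v 0 = \<infinity>"
  by (simp add: v_eq_infinity_iff)

lemma v_neq_minf: "v x \<noteq> -\<infinity>"
  by (cases "x = 0") (auto dest: v_integral)

lemma v_unit_eq_0:
  assumes "u * u = 1"
  shows "v u = 0"
proof -
  have "u \<noteq> 0" using assms by auto
  then obtain z :: int where z: "v u = ereal (of_int z)" using v_integral by blast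
  have "v 1 = v u + v u" using v_mult[of u u] assms by simp
  moreover have "v 1 = v 1 + v 1" using v_mult[of 1 1] by simp
  moreover have "v 1 \<noteq> \<infinity>" "v 1 \<noteq> -\<infinity>" using v_neq_minf v_eq_infinity_iff by auto
  ultimately show ?thesis using z by (cases "v 1") (auto simp: zero_ereal_def)
qed

lemma v_one [simp]: "v 1 = 0"
  by (rule v_unit_eq_0) simp

lemma v_minus [simp]: "v (- x) = v x"
  using v_mult[of "-1" x] v_unit_eq_0[of "-1"] by simp

lemma v_diff_commute: "v (x - y) = v (y - x)"
  using v_minus[of "x - y"] by simp

lemma v_add_ge: "B \<le> v x \<Longrightarrow> B \<le> v y \<Longrightarrow> B \<le> v (x + y)"
  using v_add[of x y] by (metis min.bounded_iff order_trans)

lemma v_diff_ge: "B \<le> v x \<Longrightarrow> B \<le> v y \<Longrightarrow> B \<le> v (x - y)"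
  using v_add_ge[of B x "- y"] by simp

lemma v_sum_ge: "(\<And>x. x \<in> A \<Longrightarrow> B \<le> v (f x)) \<Longrightarrow> B \<le> v (sum f A)"
  by (induction A rule: infinite_finite_induct) (simp_all add: v_add_ge)

lemma v_mult_ge: "0 \<le> v x \<Longrightarrow> B \<le> v y \<Longrightarrow> B \<le> v (x * y)"
  using add_mono[of 0 "v x" B "v y"] by (simp add: v_mult)

lemma v_prod: "finite A \<Longrightarrow> v (prod f A) = (\<Sum>x\<in>A. v (f x))"
  by (induction A rule: finite_induct) (simp_all add: v_mult)

lemma v_pi_power: "v (\<pi> ^ i) = ereal (real i)"
  by (induction i) (simp_all add: v_mult v_pi zero_ereal_def one_ereal_def)

lemma v_pi_power_mult_ge: "0 \<le> v h \<Longrightarrow> ereal (real i) \<le> v (\<pi> ^ i * h)"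
  using add_mono[of "ereal (real i)" "ereal (real i)" 0 "v h"] by (simp add: v_mult v_pi_power)

lemma v_sign_mult [simp]: "v (of_int (sign p) * y) = v y"
  by (simp add: sign_def)

lemma v_minus_one_power_mult [simp]: "v ((-1) ^ m * y) = v y"
  by (cases "even m") simp_all

lemma eq_0_if_v_unbounded: "(\<And>N::int. ereal (of_int N) \<le> v x) \<Longrightarrow> x = 0"
proof (rule ccontr)
  assume ge: "\<And>N::int. ereal (of_int N) \<le> v x" and "x \<noteq> 0"
  then obtain z :: int where "v x = ereal (of_int z)" using v_integral by blast
  with ge[of "z + 1"] show False by simp
qed

lemma v_prod_diff_ge:
  assumes "finite A" and "\<And>x. x \<in> A \<Longrightarrow> 0 \<le> v (f x)" and "\<And>x. x \<in> A \<Longrightarrow> 0 \<le> v (g x)"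
    and "\<And>x. x \<in> A \<Longrightarrow> B \<le> v (f x - g x)"
  shows "B \<le> v (prod f A - prod g A)"
  using assms
proof (induction A rule: finite_induct)
  case (insert x F)
  have "prod f (insert x F) - prod g (insert x F) = f x * (prod f F - prod g F) + prod g F * (f x - g x)"
    using insert.hyps by (simp add: algebra_simps)
  moreover have "0 \<le> v (prod g F)"
    using insert by (simp add: v_prod sum_nonneg)
  ultimately show ?case
    using insert by (simp add: v_add_ge v_mult_ge)
qed simp

lemma has_vsum_diff:
  assumes "has_vsum v f A L" and "has_vsum v g A M"
  shows "has_vsum v (\<lambda>S. f S - g S) A (L - M)"
  unfolding has_vsum_def
proof
  fix N :: int
  obtain F1 where F1: "finite F1" "F1 \<subseteq> A"
    and sum_f: "\<And>F. finite F \<Longrightarrow> F1 \<subseteq> F \<Longrightarrow> F \<subseteq> A \<Longrightarrow> ereal (of_int N) \<le> v (sum f F - L)"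
    using assms(1) unfolding has_vsum_def by meson
  obtain F2 where F2: "finite F2" "F2 \<subseteq> A"
    and sum_g: "\<And>F. finite F \<Longrightarrow> F2 \<subseteq> F \<Longrightarrow> F \<subseteq> A \<Longrightarrow> ereal (of_int N) \<le> v (sum g F - M)"
    using assms(2) unfolding has_vsum_def by meson
  have "ereal (of_int N) \<le> v ((\<Sum>S\<in>F. f S - g S) - (L - M))"
    if "finite F" "F1 \<union> F2 \<subseteq> F" "F \<subseteq> A" for F
  proof -
    have "ereal (of_int N) \<le> v ((sum f F - L) - (sum g F - M))"
      using that by (intro v_diff_ge sum_f sum_g) auto
    then show ?thesis
      by (simp add: sum_subtractf algebra_simps)
  qed
  then show "\<exists>F0. finite F0 \<and> F0 \<subseteq> A \<and> (\<forall>F. finite F \<and> F0 \<subseteq> F \<and> F \<subseteq> A \<longrightarrow>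
      ereal (of_int N) \<le> v ((\<Sum>S\<in>F. f S - g S) - (L - M)))"
    using F1 F2 by (intro exI[of _ "F1 \<union> F2"]) auto
qed

lemma has_vsum_ge:
  assumes "has_vsum v g A L" and "\<And>S. S \<in> A \<Longrightarrow> ereal B \<le> v (g S)"
  shows "ereal B \<le> v L"
proof -
  obtain F0 where F0: "finite F0" "F0 \<subseteq> A"
    and near: "\<forall>F. finite F \<and> F0 \<subseteq> F \<and> F \<subseteq> A \<longrightarrow> ereal (of_int \<lceil>B\<rceil>) \<le> v (sum g F - L)"
    using spec[OF assms(1)[unfolded has_vsum_def], of "\<lceil>B\<rceil>"] by blast
  have "ereal B \<le> v (sum g F0)"
    using F0(2) assms(2) by (intro v_sum_ge) auto
  moreover have "ereal B \<le> v (sum g F0 - L)"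
  proof -
    have "ereal (of_int \<lceil>B\<rceil>) \<le> v (sum g F0 - L)"
      using near F0 by blast
    then show ?thesis
      by (rule order_trans[rotated]) simp
  qed
  ultimately have "ereal B \<le> v (sum g F0 - (sum g F0 - L))"
    by (rule v_diff_ge)
  then show ?thesis by simp
qed

lemma has_vsum_unique:
  assumes "has_vsum v g A L" and "has_vsum v g A M"
  shows "L = M"
proof -
  have "has_vsum v (\<lambda>_. 0) A (L - M)"
    using has_vsum_diff[OF assms] by simp
  then have "ereal (of_int N) \<le> v (L - M)" for N :: int
    by (rule has_vsum_ge) simp
  then have "L - M = 0"
    by (rule eq_0_if_v_unbounded)
  then show ?thesis by simp
qed

lemma has_vsum_singleton: "has_vsum v g {a} (g a)"
proof -
  have "sum g F - g a = 0" if "{a} \<subseteq> F" "F \<subseteq> {a}" for F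
  proof -
    from that have "F = {a}" by blast
    then show ?thesis by simp
  qed
  then show ?thesis
    unfolding has_vsum_def by (intro allI exI[of _ "{a}"]) simp
qed

text \<open>Only finitely many terms have valuation below any given bound, so the partial sums over the
  sets of such terms form a Cauchy sequence for the ultrametric valuation.\<close>
lemma has_vsum_exists:
  assumes fin: "\<And>N::int. finite {S \<in> A. v (g S) < ereal (of_int N)}"
  shows "\<exists>L. has_vsum v g A L"
proof -
  define F where "F N = {S \<in> A. v (g S) < ereal (real N)}" for N :: nat
  define s where "s N = sum g (F N)" for N
  have F_finite: "finite (F N)" for N
    unfolding F_def using fin[of "int N"] by simp
  have F_mono: "F i \<subseteq> F j" if "i \<le> j" for i j
    using that unfolding F_def by (auto elim: less_le_trans)
  have tail_ge: "ereal (of_int N) \<le> v (sum g T)" if "T \<subseteq> A - F (nat N)" for T N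
  proof (rule v_sum_ge)
    fix S assume "S \<in> T"
    then have "ereal (real (nat N)) \<le> v (g S)"
      using that by (auto simp: F_def not_less)
    then show "ereal (of_int N) \<le> v (g S)"
      by (rule order_trans[rotated]) simp
  qed
  have s_diff_ge: "ereal (of_int N) \<le> v (s j - s i)" if "nat N \<le> i" "i \<le> j" for N i j
  proof -
    have "s j - s i = sum g (F j - F i)"
      unfolding s_def by (simp add: sum_diff[OF F_finite F_mono[OF that(2)]])
    moreover have "F j - F i \<subseteq> A - F (nat N)"
      using F_mono[OF that(1)] by (auto simp: F_def)
    ultimately show ?thesis
      using tail_ge by simp
  qed
  have "ereal (of_int N) \<le> v (s i - s j)" if "nat N \<le> i" "nat N \<le> j" for N i j
    using that s_diff_ge[of N i j] s_diff_ge[of N j i] by (cases "i \<le> j") (simp_all add: v_diff_commute)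
  then obtain L where L: "\<forall>N::int. \<exists>M. \<forall>m\<ge>M. ereal (of_int N) \<le> v (s m - L)"
    using v_complete by blast
  have "has_vsum v g A L"
    unfolding has_vsum_def
  proof
    fix N :: int
    obtain M where M: "\<And>m. m \<ge> M \<Longrightarrow> ereal (of_int N) \<le> v (s m - L)"
      using L by blast
    define m where "m = max M (nat N)"
    have "ereal (of_int N) \<le> v (sum g T - L)" if T: "finite T" "F (nat N) \<subseteq> T" "T \<subseteq> A" for T
    proof -
      have split: "sum g T - L = sum g (T - F (nat N)) + (s (nat N) - s m) + (s m - L)"
        using T F_finite by (simp add: s_def sum.subset_diff[of "F (nat N)" T])
      have "ereal (of_int N) \<le> v (sum g (T - F (nat N)))"
        using T(3) by (intro tail_ge) blast
      moreover have "ereal (of_int N) \<le> v (s (nat N) - s m)"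
        using s_diff_ge[of N "nat N" m] by (simp add: m_def v_diff_commute)
      moreover have "ereal (of_int N) \<le> v (s m - L)"
        using M by (simp add: m_def)
      ultimately show ?thesis
        unfolding split by (intro v_add_ge)
    qed
    then show "\<exists>F0. finite F0 \<and> F0 \<subseteq> A \<and> (\<forall>F. finite F \<and> F0 \<subseteq> F \<and> F \<subseteq> A \<longrightarrow>
        ereal (of_int N) \<le> v (sum g F - L))"
      using F_finite by (intro exI[of _ "F (nat N)"]) (auto simp: F_def)
  qed
  then show ?thesis ..
qed

text \<open>The weights \<open>w\<close> cancel along every permutation: principal minors are invariant under
  diagonal rescaling.\<close>
lemma v_pminor_ge:
  assumes "finite S"
    and "\<And>x y. x \<in> S \<Longrightarrow> y \<in> S \<Longrightarrow> ereal (\<beta> x + w x - w y) \<le> v (G x y)"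
  shows "ereal (\<Sum>x\<in>S. \<beta> x) \<le> v (pminor G S)"
  unfolding pminor_def
proof (rule v_sum_ge)
  fix p assume "p \<in> {p. p permutes S}"
  then have p: "p permutes S" by simp
  have "ereal (\<Sum>x\<in>S. \<beta> x) = (\<Sum>x\<in>S. ereal (\<beta> x + w x - w (p x)))"
    using sum.permute[OF p, of w] by (simp add: sum.distrib sum_subtractf)
  also have "\<dots> \<le> (\<Sum>x\<in>S. v (G x (p x)))"
    using assms(2) permutes_in_image[OF p] by (intro sum_mono) auto
  also have "\<dots> = v (of_int (sign p) * (\<Prod>x\<in>S. G x (p x)))"
    using assms(1) by (simp add: v_prod)
  finally show "ereal (\<Sum>x\<in>S. \<beta> x) \<le> v (of_int (sign p) * (\<Prod>x\<in>S. G x (p x)))" .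
qed

lemma v_pminor_nonneg:
  assumes "finite S" and "\<And>x y. x \<in> S \<Longrightarrow> y \<in> S \<Longrightarrow> 0 \<le> v (G x y)"
  shows "0 \<le> v (pminor G S)"
  using v_pminor_ge[of S "\<lambda>_. 0" "\<lambda>_. 0" G] assms by (simp add: zero_ereal_def)

lemma v_pminor_diff_ge:
  assumes "finite S"
    and "\<And>x y. x \<in> S \<Longrightarrow> y \<in> S \<Longrightarrow> 0 \<le> v (G x y)"
    and "\<And>x y. x \<in> S \<Longrightarrow> y \<in> S \<Longrightarrow> 0 \<le> v (H x y)"
    and "\<And>x y. x \<in> S \<Longrightarrow> y \<in> S \<Longrightarrow> B \<le> v (G x y - H x y)"
  shows "B \<le> v (pminor G S - pminor H S)"
proof -
  have "pminor G S - pminor H S =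
      (\<Sum>p\<in>{p. p permutes S}. of_int (sign p) * ((\<Prod>x\<in>S. G x (p x)) - (\<Prod>x\<in>S. H x (p x))))"
    unfolding pminor_def by (simp add: sum_subtractf right_diff_distrib)
  also have "B \<le> v \<dots>"
  proof (rule v_sum_ge)
    fix p assume "p \<in> {p. p permutes S}"
    then have "B \<le> v ((\<Prod>x\<in>S. G x (p x)) - (\<Prod>x\<in>S. H x (p x)))"
      using assms permutes_in_image[of p S] by (intro v_prod_diff_ge) auto
    then show "B \<le> v (of_int (sign p) * ((\<Prod>x\<in>S. G x (p x)) - (\<Prod>x\<in>S. H x (p x))))"
      by simp
  qed
  finally show ?thesis .
qed

lemma Mstar_nonneg: "f \<in> Mstar v n \<Longrightarrow> 0 \<le> v (f x)"
  unfolding Mstar_def by (cases x) simp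

lemma zero_in_Mstar: "(\<lambda>_. 0) \<in> Mstar v n"
  unfolding Mstar_def by simp

lemma Mstar_diff:
  assumes f: "f \<in> Mstar v n" and g: "g \<in> Mstar v n"
  shows "(\<lambda>x. f x - g x) \<in> Mstar v n"
proof -
  have "{x. v (f x - g x) < ereal (of_int N)} \<subseteq>
      {x. v (f x) < ereal (of_int N)} \<union> {x. v (g x) < ereal (of_int N)}" for N :: int
  proof
    fix x assume "x \<in> {x. v (f x - g x) < ereal (of_int N)}"
    then have "\<not> (ereal (of_int N) \<le> v (f x) \<and> ereal (of_int N) \<le> v (g x))"
      using v_diff_ge[of "ereal (of_int N)" "f x" "g x"] by auto
    then show "x \<in> {x. v (f x) < ereal (of_int N)} \<union> {x. v (g x) < ereal (of_int N)}"
      by (auto simp: not_le)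
  qed
  then have "finite {x. v (f x - g x) < ereal (of_int N)}" for N :: int
    by (rule finite_subset) (use f g in \<open>simp add: Mstar_def\<close>)
  then show ?thesis
    using f g unfolding Mstar_def by (auto intro: v_diff_ge)
qed

lemma pi_power_basis_in_Mstar_bc:
  assumes "u \<in> MI n" and "b * real (deg n u) + c \<le> real t"
  shows "(\<lambda>z. \<pi> ^ t * basis (u, j) z) \<in> Mstar_bc v n b c"
proof -
  have v_eq: "v (\<pi> ^ t * basis (u, j) z) = (if z = (u, j) then ereal (real t) else \<infinity>)" for z
    by (simp add: basis_def v_pi_power)
  have "finite {z. v (\<pi> ^ t * basis (u, j) z) < ereal (of_int N)}" for N :: int
    by (rule finite_subset[of _ "{(u, j)}"]) (auto simp: v_eq)
  then show ?thesis
    using assms unfolding Mstar_bc_def Mstar_def by (auto simp: basis_def v_pi_power)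
qed

lemma basis_in_Mstar: "u \<in> MI n \<Longrightarrow> basis (u, j) \<in> Mstar v n"
  using pi_power_basis_in_Mstar_bc[of u n 0 0 0 j] by (simp add: Mstar_bc_def)

lemma dwork_op_in_Mstar: "dwork_op v n \<sigma> \<Theta> \<Longrightarrow> f \<in> Mstar v n \<Longrightarrow> \<Theta> f \<in> Mstar v n"
  unfolding dwork_op_def by blast

lemma dwork_op_scale:
  "dwork_op v n \<sigma> \<Theta> \<Longrightarrow> f \<in> Mstar v n \<Longrightarrow> 0 \<le> v r \<Longrightarrow> \<Theta> (\<lambda>x. r * f x) = (\<lambda>x. r * \<Theta> f x)"
  unfolding dwork_op_def by blast

lemma gstar_nonneg:
  assumes "dwork_op v n \<sigma> \<Theta>" and "fst y \<in> MI n"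
  shows "0 \<le> v (gstar \<Theta> x y)"
proof -
  have "basis y \<in> Mstar v n"
    using basis_in_Mstar[of "fst y" n "snd y"] assms(2) by simp
  then show ?thesis
    using dwork_op_in_Mstar[OF assms(1)]
    unfolding gstar_def by (blast intro: Mstar_nonneg)
qed

text \<open>Apply the contraction to the basis vector \<open>(w, j2)\<close>, rescaled by the least power of
  \<open>\<pi>\<close> that puts it into \<open>M*(b, c)\<close>.\<close>
lemma gstar_ge_if_contracting:
  assumes "dwork_op v n \<sigma> \<Theta>" and "b \<ge> 0"
    and "\<And>f. f \<in> Mstar_bc v n b c \<Longrightarrow> \<Theta> f \<in> Mstar_bc v n (q * b) (c + c1)"
    and "u \<in> MI n" and "w \<in> MI n"
  shows "ereal (q * b * real (deg n u) - b * real (deg n w) - (2 * \<bar>c\<bar> + \<bar>c1\<bar> + 1))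
    \<le> v (gstar \<Theta> (u, j1) (w, j2))"
proof -
  define t where "t = nat \<lceil>b * real (deg n w) + \<bar>c\<bar>\<rceil>"
  have "real t = of_int \<lceil>b * real (deg n w) + \<bar>c\<bar>\<rceil>"
    unfolding t_def using assms(2) by simp
  then have t_ge: "b * real (deg n w) + c \<le> real t" and t_le: "real t \<le> b * real (deg n w) + \<bar>c\<bar> + 1"
    using ceiling_correct[of "b * real (deg n w) + \<bar>c\<bar>"] abs_ge_self[of c] by linarith+
  have "\<Theta> (\<lambda>z. \<pi> ^ t * basis (w, j2) z) = (\<lambda>z. \<pi> ^ t * \<Theta> (basis (w, j2)) z)"
    using dwork_op_scale[OF assms(1) basis_in_Mstar[OF assms(5)]] by (simp add: v_pi_power)
  moreover have "\<Theta> (\<lambda>z. \<pi> ^ t * basis (w, j2) z) \<in> Mstar_bc v n (q * b) (c + c1)"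
    by (rule assms(3)[OF pi_power_basis_in_Mstar_bc[OF assms(5) t_ge]])
  ultimately have "ereal (q * b * real (deg n u) + (c + c1)) \<le> ereal (real t) + v (gstar \<Theta> (u, j1) (w, j2))"
    using assms(4) unfolding Mstar_bc_def gstar_def by (simp add: v_mult v_pi_power)
  then show ?thesis
    using t_le v_neq_minf[of "gstar \<Theta> (u, j1) (w, j2)"]
    by (cases "v (gstar \<Theta> (u, j1) (w, j2))") auto
qed

end

definition maps_into_pi_power :: "('k::field_char_0 \<Rightarrow> ereal) \<Rightarrow> 'k \<Rightarrow> nat \<Rightarrow> ('j, 'k) op \<Rightarrow> nat \<Rightarrow> bool"
  where "maps_into_pi_power v \<pi> n \<Delta> i \<longleftrightarrow> (\<forall>f\<in>Mstar v n. \<exists>h\<in>Mstar v n. \<Delta> f = (\<lambda>x. \<pi> ^ i * h x))"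

lemma op_norm_eq:
  "op_norm v \<pi> p n \<Delta> = (if \<forall>f\<in>Mstar v n. \<Delta> f = (\<lambda>_. 0) then 0
     else real p powr - real (GREATEST i. maps_into_pi_power v \<pi> n \<Delta> i))"
  unfolding op_norm_def maps_into_pi_power_def ..

context valued_field
begin

lemma v_ge_if_maps_into_pi_power:
  assumes "maps_into_pi_power v \<pi> n \<Delta> i" and "f \<in> Mstar v n"
  shows "ereal (real i) \<le> v (\<Delta> f x)"
proof -
  obtain h where "h \<in> Mstar v n" and "\<Delta> f = (\<lambda>x. \<pi> ^ i * h x)"
    using assms unfolding maps_into_pi_power_def by blast
  then show ?thesis
    by (simp add: Mstar_nonneg v_pi_power_mult_ge)
qed

lemma gstar_diff_ge:
  assumes "maps_into_pi_power v \<pi> n (op_diff \<Theta>1 \<Theta>2) i" and "fst y \<in> MI n"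
  shows "ereal (real i) \<le> v (gstar \<Theta>1 x y - gstar \<Theta>2 x y)"
  using v_ge_if_maps_into_pi_power[OF assms(1) basis_in_Mstar[of "fst y" n "snd y"]] assms(2)
  unfolding gstar_def op_diff_def by simp

lemma ser_norm_le_powr:
  assumes "real p \<ge> 1" and "\<And>m. ereal r \<le> v (F m - H m)"
  shows "ser_norm v p F H \<le> real p powr - r"
  unfolding ser_norm_def
proof (rule cSUP_least)
  fix m
  show "absv v p (F m - H m) \<le> real p powr - r"
  proof (cases "F m - H m = 0")
    case False
    then obtain z :: int where z: "v (F m - H m) = ereal (of_int z)"
      using v_integral by blast
    with assms(2)[of m] have "r \<le> of_int z" by simp
    then show ?thesis
      using z False assms(1) by (simp add: absv_def powr_mono)
  qed (simp add: absv_def)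
qed simp

lemma ser_norm_le_op_norm:
  assumes "real p \<ge> 1"
    and "\<And>f. f \<in> Mstar v n \<Longrightarrow> \<Delta> f \<in> Mstar v n"
    and "\<And>i m. maps_into_pi_power v \<pi> n \<Delta> i \<Longrightarrow> ereal (real i) \<le> v (F m - H m)"
  shows "ser_norm v p F H \<le> op_norm v \<pi> p n \<Delta>"
proof (cases "\<forall>f\<in>Mstar v n. \<Delta> f = (\<lambda>_. 0)")
  case True
  then have "maps_into_pi_power v \<pi> n \<Delta> i" for i
    unfolding maps_into_pi_power_def using zero_in_Mstar by fastforce
  then have "ereal (of_int N) \<le> v (F m - H m)" for N :: int and m
    using assms(3)[of "nat N" m] by (auto elim!: order_trans[rotated])
  then have "F m - H m = 0" for m
    by (rule eq_0_if_v_unbounded)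
  then show ?thesis
    using True by (simp add: ser_norm_def absv_def op_norm_eq)
next
  case False
  then obtain f x where f: "f \<in> Mstar v n" and "\<Delta> f x \<noteq> 0"
    by fast
  then obtain z :: int where z: "v (\<Delta> f x) = ereal (of_int z)"
    using v_integral by blast
  have bounded: "i \<le> nat z" if "maps_into_pi_power v \<pi> n \<Delta> i" for i
    using v_ge_if_maps_into_pi_power[OF that f, of x] z by simp
  have "maps_into_pi_power v \<pi> n \<Delta> 0"
    using assms(2) unfolding maps_into_pi_power_def by force
  then have "maps_into_pi_power v \<pi> n \<Delta> (GREATEST i. maps_into_pi_power v \<pi> n \<Delta> i)"
    using bounded by (rule GreatestI_nat)
  then have "ser_norm v p F H \<le> real p powr - real (GREATEST i. maps_into_pi_power v \<pi> n \<Delta> i)"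
    using assms(1,3) by (intro ser_norm_le_powr)
  then show ?thesis
    by (simp only: op_norm_eq False if_False)
qed

lemma fred_coeff_eq:
  fixes \<Theta> :: "('j, 'k) op"
  assumes "has_vsum v (pminor (gstar \<Theta>)) (minor_sets n m) L"
  shows "fred_coeff v n \<Theta> m = (-1) ^ m * L"
proof -
  have "(THE L. has_vsum v (pminor (gstar \<Theta>)) (minor_sets n m) L) = L"
    using assms by (rule the_equality) (rule has_vsum_unique[OF _ assms])
  then show ?thesis
    unfolding fred_coeff_def by simp
qed

lemma fred_coeff_0:
  fixes \<Theta> :: "('j, 'k) op"
  shows "fred_coeff v n \<Theta> 0 = 1"
proof -
  have "minor_sets n 0 = {{} :: ((nat \<Rightarrow> nat) \<times> 'j) set}"
    unfolding minor_sets_def by auto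
  moreover have "pminor (gstar \<Theta>) {} = 1"
    unfolding pminor_def by simp
  ultimately have "has_vsum v (pminor (gstar \<Theta>)) (minor_sets n 0) 1"
    using has_vsum_singleton[of "pminor (gstar \<Theta>)" "{}"] by simp
  then show ?thesis
    by (simp add: fred_coeff_eq)
qed

end

lemma finite_MI_deg_le: "finite {u \<in> MI n. deg n u \<le> d}"
proof (rule finite_subset)
  show "{u \<in> MI n. deg n u \<le> d} \<subseteq> {u. \<forall>i. (i \<in> {..<n} \<longrightarrow> u i \<in> {..d}) \<and> (i \<notin> {..<n} \<longrightarrow> u i = 0)}"
  proof
    fix u assume u: "u \<in> {u \<in> MI n. deg n u \<le> d}"
    have "u i \<le> d" if "i < n" for i
    proof -
      have "u i \<le> deg n u"
        unfolding deg_def using that by (intro member_le_sum) auto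
      with u show ?thesis
        by simp
    qed
    with u show "u \<in> {u. \<forall>i. (i \<in> {..<n} \<longrightarrow> u i \<in> {..d}) \<and> (i \<notin> {..<n} \<longrightarrow> u i = 0)}"
      by (auto simp: MI_def)
  qed
  show "finite {u. \<forall>i. (i \<in> {..<n} \<longrightarrow> u i \<in> {..d}) \<and> (i \<notin> {..<n} \<longrightarrow> u i = 0)}"
    by (rule finite_set_of_finite_funs) auto
qed

lemma minor_setsD:
  assumes "S \<in> minor_sets n m"
  shows "finite S" and "card S = m" and "x \<in> S \<Longrightarrow> fst x \<in> MI n"
  using assms unfolding minor_sets_def by auto

text \<open>In the basis \<open>\<pi>\<^bsup>b|u|\<^esup> X\<^sup>u e\<^sub>j\<^sup>*\<close> the entry of \<open>G k\<close> in row \<open>(u, j1)\<close> and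
  column \<open>(w, j2)\<close> is multiplied by \<open>\<pi>\<^bsup>b|w| - b|u|\<^esup>\<close>, so \<open>entry_ge\<close> says that the
  rescaled entries in row \<open>u\<close> have valuation at least \<open>(q - 1) b |u| - D\<close>.\<close>
locale uniform_matrix_family = valued_field +
  fixes G :: "'a \<Rightarrow> (nat \<Rightarrow> nat) \<times> 'j \<Rightarrow> (nat \<Rightarrow> nat) \<times> 'j \<Rightarrow> 'k::field_char_0"
    and n :: nat and q b D :: real
  assumes q_gt_1: "q > 1" and b_pos: "b > 0" and D_nonneg: "D \<ge> 0"
    and entry_nonneg: "fst y \<in> MI n \<Longrightarrow> 0 \<le> v (G k x y)"
    and entry_ge: "u \<in> MI n \<Longrightarrow> w \<in> MI n \<Longrightarrow>
      ereal (q * b * real (deg n u) - b * real (deg n w) - D) \<le> v (G k (u, j1) (w, j2))"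
    and rows_finite: "u \<in> MI n \<Longrightarrow> w \<in> MI n \<Longrightarrow>
      finite {j1. \<exists>j2 k. v (G k (u, j1) (w, j2)) < ereal (of_int N)}"
begin

definition exceptional_rows :: "real \<Rightarrow> ((nat \<Rightarrow> nat) \<times> 'j) set" where
  "exceptional_rows N = {x. fst x \<in> MI n \<and> (\<exists>k y. fst y \<in> MI n \<and>
      v (G k x y) < ereal (N + b * real (deg n (fst x)) - b * real (deg n (fst y))))}"

lemma exceptional_rows_finite: "finite (exceptional_rows N)"
proof -
  define U where "U = nat \<lceil>(N + D) / ((q - 1) * b)\<rceil>"
  define W where "W = nat \<lceil>(N + b * real U) / b\<rceil>"
  define J where "J u w = {j1. \<exists>j2 k. v (G k (u, j1) (w, j2)) < ereal (of_int \<lceil>N + b * real U\<rceil>)}"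
    for u w
  have qb: "(q - 1) * b > 0"
    using q_gt_1 b_pos by simp
  have "exceptional_rows N
      \<subseteq> (\<Union>u\<in>{u \<in> MI n. deg n u \<le> U}. \<Union>w\<in>{w \<in> MI n. deg n w \<le> W}. {u} \<times> J u w)"
  proof
    fix x assume x: "x \<in> exceptional_rows N"
    obtain u j1 where x_eq: "x = (u, j1)"
      by (cases x)
    from x obtain k w j2 where u: "u \<in> MI n" and w: "w \<in> MI n"
      and small: "v (G k (u, j1) (w, j2)) < ereal (N + b * real (deg n u) - b * real (deg n w))"
      unfolding exceptional_rows_def x_eq by auto
    have "q * b * real (deg n u) - b * real (deg n w) - D < N + b * real (deg n u) - b * real (deg n w)"
      using le_less_trans[OF entry_ge[OF u w] small] by simp
    then have "real (deg n u) * ((q - 1) * b) \<le> N + D"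
      by (simp add: algebra_simps)
    then have "real (deg n u) \<le> (N + D) / ((q - 1) * b)"
      using qb by (simp add: pos_le_divide_eq)
    then have "real (deg n u) \<le> real U"
      unfolding U_def using real_nat_ceiling_ge[of "(N + D) / ((q - 1) * b)"] by linarith
    then have deg_u: "deg n u \<le> U"
      by simp
    have "0 < N + b * real (deg n u) - b * real (deg n w)"
      using le_less_trans[OF entry_nonneg small] w by simp
    moreover have bu: "b * real (deg n u) \<le> b * real U"
      using deg_u b_pos by simp
    ultimately have "real (deg n w) * b \<le> N + b * real U"
      by (simp add: mult.commute)
    then have "real (deg n w) \<le> (N + b * real U) / b"
      using b_pos by (simp add: pos_le_divide_eq)
    then have "real (deg n w) \<le> real W"
      unfolding W_def using real_nat_ceiling_ge[of "(N + b * real U) / b"] by linarith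
    then have deg_w: "deg n w \<le> W"
      by simp
    have "0 \<le> b * real (deg n w)"
      using b_pos by simp
    then have "N + b * real (deg n u) - b * real (deg n w) \<le> of_int \<lceil>N + b * real U\<rceil>"
      using bu le_of_int_ceiling[of "N + b * real U"] by linarith
    then have "v (G k (u, j1) (w, j2)) < ereal (of_int \<lceil>N + b * real U\<rceil>)"
      using small by (simp add: less_le_trans)
    then have "j1 \<in> J u w"
      unfolding J_def by blast
    then show "x \<in> (\<Union>u\<in>{u \<in> MI n. deg n u \<le> U}. \<Union>w\<in>{w \<in> MI n. deg n w \<le> W}. {u} \<times> J u w)"
      using u w deg_u deg_w unfolding x_eq by blast
  qed
  moreover have "finite (\<Union>u\<in>{u \<in> MI n. deg n u \<le> U}. \<Union>w\<in>{w \<in> MI n. deg n w \<le> W}. {u} \<times> J u w)"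
    unfolding J_def by (intro finite_UN_I finite_MI_deg_le finite_SigmaI rows_finite) auto
  ultimately show ?thesis
    by (rule finite_subset)
qed

lemma entry_ge_rescaled:
  assumes "fst x \<in> MI n" and "fst y \<in> MI n"
  shows "ereal ((if x \<in> exceptional_rows N then - D else N) + b * real (deg n (fst x)) - b * real (deg n (fst y)))
    \<le> v (G k x y)"
proof (cases "x \<in> exceptional_rows N")
  case True
  have "0 \<le> (q - 1) * b * real (deg n (fst x))"
    using q_gt_1 b_pos by simp
  then have "ereal (- D + b * real (deg n (fst x)) - b * real (deg n (fst y)))
      \<le> ereal (q * b * real (deg n (fst x)) - b * real (deg n (fst y)) - D)"
    by (simp add: algebra_simps)
  also have "\<dots> \<le> v (G k x y)"
    using entry_ge[OF assms, of k "snd x" "snd y"] by simp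
  finally show ?thesis
    unfolding if_P[OF True] .
next
  case False
  then have "\<not> v (G k x y) < ereal (N + b * real (deg n (fst x)) - b * real (deg n (fst y)))"
    using assms unfolding exceptional_rows_def by blast
  then show ?thesis
    using False by (simp add: not_less)
qed

lemma v_minor_ge:
  assumes "S \<in> minor_sets n m"
  shows "ereal (N * real m - (N + D) * real (card (S \<inter> exceptional_rows N))) \<le> v (pminor (G k) S)"
proof -
  note S = minor_setsD[OF assms]
  define X where "X = exceptional_rows N"
  have "(\<Sum>x\<in>S. if x \<in> X then - D else N) = - D * real (card (S \<inter> X)) + N * real (card (S - X))"
    using sum.If_cases[OF S(1), of "\<lambda>x. x \<in> X" "\<lambda>_. - D" "\<lambda>_. N"] by (simp add: Diff_eq)
  moreover have "real m = real (card (S \<inter> X)) + real (card (S - X))"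
    using card_Int_Diff[OF S(1), of X] S(2) by simp
  ultimately have "(\<Sum>x\<in>S. if x \<in> X then - D else N) = N * real m - (N + D) * real (card (S \<inter> X))"
    by (simp add: algebra_simps)
  moreover have "ereal (\<Sum>x\<in>S. if x \<in> X then - D else N) \<le> v (pminor (G k) S)"
    using S(1) entry_ge_rescaled[OF S(3) S(3)] unfolding X_def
    by (rule v_pminor_ge[where w = "\<lambda>x. b * real (deg n (fst x))"])
  ultimately show ?thesis
    unfolding X_def by simp
qed

text \<open>A minor of size \<open>m\<close> that is not made of exceptional rows only has valuation at least
  \<open>N - (m - 1) D\<close>, and the exceptional rows are finitely many.\<close>
lemma minor_sum_exists: "\<exists>L. has_vsum v (pminor (G k)) (minor_sets n m) L"
proof (rule has_vsum_exists)
  fix N0 :: int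
  define N where "N = \<bar>real_of_int N0\<bar> + D * real m"
  have "S \<subseteq> exceptional_rows N"
    if S: "S \<in> minor_sets n m" and small: "v (pminor (G k) S) < ereal (of_int N0)" for S
  proof (rule ccontr)
    assume "\<not> S \<subseteq> exceptional_rows N"
    then have "S \<inter> exceptional_rows N \<subset> S"
      by blast
    then have "card (S \<inter> exceptional_rows N) < m"
      using psubset_card_mono[OF minor_setsD(1)[OF S]] minor_setsD(2)[OF S] by simp
    then have "(N + D) * real (card (S \<inter> exceptional_rows N)) \<le> (N + D) * (real m - 1)"
      using D_nonneg by (intro mult_left_mono) (auto simp: N_def)
    moreover have "N * real m - (N + D) * (real m - 1) = \<bar>real_of_int N0\<bar> + D"
      unfolding N_def by (simp add: algebra_simps)
    ultimately have "ereal (of_int N0) \<le> ereal (N * real m - (N + D) * real (card (S \<inter> exceptional_rows N)))"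
      using D_nonneg abs_ge_self[of "real_of_int N0"] by simp
    also have "\<dots> \<le> v (pminor (G k) S)"
      by (rule v_minor_ge[OF S])
    finally show False
      using small by simp
  qed
  then have "{S \<in> minor_sets n m. v (pminor (G k) S) < ereal (of_int N0)} \<subseteq> Pow (exceptional_rows N)"
    by blast
  then show "finite {S \<in> minor_sets n m. v (pminor (G k) S) < ereal (of_int N0)}"
    using exceptional_rows_finite by (simp add: finite_subset)
qed

lemma minor_sum_nonneg:
  assumes "has_vsum v (pminor (G k)) (minor_sets n m) L"
  shows "0 \<le> v L"
proof -
  have "ereal 0 \<le> v (pminor (G k) S)" if "S \<in> minor_sets n m" for S
    using minor_setsD[OF that] by (simp add: v_pminor_nonneg entry_nonneg flip: zero_ereal_def)
  then have "ereal 0 \<le> v L"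
    by (rule has_vsum_ge[OF assms])
  then show ?thesis
    by (simp add: zero_ereal_def)
qed

text \<open>For \<open>N = |N0| + 1\<close>, a minor of size \<open>m\<close> has valuation at least \<open>N m - (N + D) c\<close> with \<open>c\<close>
  the number of exceptional rows, and this exceeds \<open>N0 m\<close> once \<open>m \<ge> (N + D) c\<close>.\<close>
lemma minor_sum_growth:
  "\<exists>M. \<forall>m\<ge>M. \<forall>k L. has_vsum v (pminor (G k)) (minor_sets n m) L \<longrightarrow> ereal (N0 * real m) \<le> v L"
proof -
  define N where "N = \<bar>N0\<bar> + 1"
  define c where "c = card (exceptional_rows N)"
  have "ereal (N0 * real m) \<le> v L"
    if m: "(N + D) * real c \<le> real m" and L: "has_vsum v (pminor (G k)) (minor_sets n m) L" for m k L
  proof (rule has_vsum_ge[OF L])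
    fix S :: "((nat \<Rightarrow> nat) \<times> 'j) set" assume S: "S \<in> minor_sets n m"
    have "card (S \<inter> exceptional_rows N) \<le> c"
      unfolding c_def using exceptional_rows_finite by (intro card_mono) auto
    then have "(N + D) * real (card (S \<inter> exceptional_rows N)) \<le> (N + D) * real c"
      using D_nonneg by (intro mult_left_mono) (auto simp: N_def)
    with m have "(N + D) * real (card (S \<inter> exceptional_rows N)) \<le> real m"
      by linarith
    moreover have "N0 * real m \<le> (N - 1) * real m"
      unfolding N_def by (intro mult_right_mono) auto
    ultimately have "ereal (N0 * real m) \<le> ereal (N * real m - (N + D) * real (card (S \<inter> exceptional_rows N)))"
      by (simp add: algebra_simps)
    also have "\<dots> \<le> v (pminor (G k) S)"
      by (rule v_minor_ge[OF S])
    finally show "ereal (N0 * real m) \<le> v (pminor (G k) S)" .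
  qed
  moreover have "(N + D) * real c \<le> real m" if "nat \<lceil>(N + D) * real c\<rceil> \<le> m" for m
  proof -
    have "real (nat \<lceil>(N + D) * real c\<rceil>) \<le> real m"
      using that by (rule of_nat_mono)
    then show ?thesis
      using real_nat_ceiling_ge[of "(N + D) * real c"] by linarith
  qed
  ultimately show ?thesis
    by blast
qed

lemma minor_sum_diff_ge:
  assumes "\<And>x y. fst y \<in> MI n \<Longrightarrow> ereal B \<le> v (G k1 x y - G k2 x y)"
    and "has_vsum v (pminor (G k1)) (minor_sets n m) L1"
    and "has_vsum v (pminor (G k2)) (minor_sets n m) L2"
  shows "ereal B \<le> v (L1 - L2)"
proof (rule has_vsum_ge[OF has_vsum_diff[OF assms(2,3)]])
  fix S :: "((nat \<Rightarrow> nat) \<times> 'j) set" assume "S \<in> minor_sets n m"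
  then show "ereal B \<le> v (pminor (G k1) S - pminor (G k2) S)"
    using minor_setsD[of S n m] by (intro v_pminor_diff_ge) (auto simp: assms(1) entry_nonneg)
qed

end

locale uniform_dwork_family = valued_field +
  fixes \<Theta> :: "'a \<Rightarrow> ('j, 'k::field_char_0) op" and n :: nat
    and \<sigma> :: "((nat \<Rightarrow> nat) \<Rightarrow> 'k) \<Rightarrow> ((nat \<Rightarrow> nat) \<Rightarrow> 'k)"
    and q b c c1 :: real
  assumes dwork: "dwork_op v n \<sigma> (\<Theta> k)"
    and q_gt_1: "q > 1" and b_pos: "b > 0"
    and contracts: "f \<in> Mstar_bc v n b c \<Longrightarrow> \<Theta> k f \<in> Mstar_bc v n (q * b) (c + c1)"
    and uniformly_nuclear: "u \<in> MI n \<Longrightarrow> w \<in> MI n \<Longrightarrow>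
      finite {j1. \<exists>j2 k. v (gstar (\<Theta> k) (u, j1) (w, j2)) < ereal (of_int N)}"
begin

sublocale matrices: uniform_matrix_family v \<pi> "\<lambda>k. gstar (\<Theta> k)" n q b "2 * \<bar>c\<bar> + \<bar>c1\<bar> + 1"
proof unfold_locales
  show "fst y \<in> MI n \<Longrightarrow> 0 \<le> v (gstar (\<Theta> k) x y)" for k x y
    by (rule gstar_nonneg[OF dwork])
  show "u \<in> MI n \<Longrightarrow> w \<in> MI n \<Longrightarrow> ereal (q * b * real (deg n u) - b * real (deg n w)
      - (2 * \<bar>c\<bar> + \<bar>c1\<bar> + 1)) \<le> v (gstar (\<Theta> k) (u, j1) (w, j2))" for u w k j1 j2
    using b_pos by (intro gstar_ge_if_contracting[OF dwork _ contracts]) auto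
qed (use q_gt_1 b_pos uniformly_nuclear in auto)

lemma fred_coeff_minor_sum:
  obtains L where "has_vsum v (pminor (gstar (\<Theta> k))) (minor_sets n m) L"
    and "fred_coeff v n (\<Theta> k) m = (-1) ^ m * L"
  using matrices.minor_sum_exists fred_coeff_eq by blast

lemma fred_exists: "fred_exists v n (\<Theta> k)"
  unfolding fred_exists_def using matrices.minor_sum_exists by blast

lemma unif_entire_fred_coeff: "unif_entire v (\<lambda>k. fred_coeff v n (\<Theta> k))"
  unfolding unif_entire_def
proof (intro conjI allI)
  show "fred_coeff v n (\<Theta> k) 0 = 1" for k
    by (rule fred_coeff_0)
  show "0 \<le> v (fred_coeff v n (\<Theta> k) m)" for k m
  proof -
    obtain L where "has_vsum v (pminor (gstar (\<Theta> k))) (minor_sets n m) L"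
      and "fred_coeff v n (\<Theta> k) m = (-1) ^ m * L"
      by (rule fred_coeff_minor_sum)
    then show ?thesis
      using matrices.minor_sum_nonneg by simp
  qed
  show "\<exists>M. \<forall>m\<ge>M. \<forall>k. ereal (N * real m) \<le> v (fred_coeff v n (\<Theta> k) m)" for N
  proof -
    obtain M where M: "\<And>m k L. m \<ge> M \<Longrightarrow> has_vsum v (pminor (gstar (\<Theta> k))) (minor_sets n m) L
        \<Longrightarrow> ereal (N * real m) \<le> v L"
      using matrices.minor_sum_growth[of N] by blast
    have "ereal (N * real m) \<le> v (fred_coeff v n (\<Theta> k) m)" if "m \<ge> M" for m k
    proof -
      obtain L where "has_vsum v (pminor (gstar (\<Theta> k))) (minor_sets n m) L"
        and "fred_coeff v n (\<Theta> k) m = (-1) ^ m * L"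
        by (rule fred_coeff_minor_sum)
      then show ?thesis
        using M[OF that] by simp
    qed
    then show ?thesis
      by blast
  qed
qed

lemma fred_coeff_diff_ge:
  assumes "maps_into_pi_power v \<pi> n (op_diff (\<Theta> k1) (\<Theta> k2)) i"
  shows "ereal (real i) \<le> v (fred_coeff v n (\<Theta> k1) m - fred_coeff v n (\<Theta> k2) m)"
proof -
  obtain L1 where L1: "has_vsum v (pminor (gstar (\<Theta> k1))) (minor_sets n m) L1"
    and coeff1: "fred_coeff v n (\<Theta> k1) m = (-1) ^ m * L1"
    by (rule fred_coeff_minor_sum)
  obtain L2 where L2: "has_vsum v (pminor (gstar (\<Theta> k2))) (minor_sets n m) L2"
    and coeff2: "fred_coeff v n (\<Theta> k2) m = (-1) ^ m * L2"
    by (rule fred_coeff_minor_sum)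
  have "fred_coeff v n (\<Theta> k1) m - fred_coeff v n (\<Theta> k2) m = (-1) ^ m * (L1 - L2)"
    by (simp add: coeff1 coeff2 right_diff_distrib)
  moreover have "ereal (real i) \<le> v (L1 - L2)"
    using gstar_diff_ge[OF assms] L1 L2 by (rule matrices.minor_sum_diff_ge)
  ultimately show ?thesis
    by simp
qed

lemma ser_norm_fred_coeff_le:
  assumes "real p \<ge> 1"
  shows "ser_norm v p (fred_coeff v n (\<Theta> k1)) (fred_coeff v n (\<Theta> k2))
    \<le> op_norm v \<pi> p n (op_diff (\<Theta> k1) (\<Theta> k2))"
proof (rule ser_norm_le_op_norm[OF assms])
  show "op_diff (\<Theta> k1) (\<Theta> k2) f \<in> Mstar v n" if "f \<in> Mstar v n" for f
    unfolding op_diff_def by (intro Mstar_diff dwork_op_in_Mstar[OF dwork that])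
qed (rule fred_coeff_diff_ge)

end

lemma unif_cont_series_if_ser_norm_le:
  fixes \<Theta> :: "'a::uniform_space \<Rightarrow> ('j, 'k::field_char_0) op"
  assumes "\<And>k1 k2. ser_norm v p (F k1) (F k2) \<le> op_norm v \<pi> p n (op_diff (\<Theta> k1) (\<Theta> k2))"
    and "unif_cont_ops v \<pi> p n \<Theta>"
  shows "unif_cont_series v p F"
  unfolding unif_cont_series_def
proof (intro allI impI)
  fix \<epsilon> :: real assume "\<epsilon> > 0"
  then have "\<forall>\<^sub>F (k1, k2) in uniformity. op_norm v \<pi> p n (op_diff (\<Theta> k1) (\<Theta> k2)) < \<epsilon>"
    using assms(2) unfolding unif_cont_ops_def by blast
  then show "\<forall>\<^sub>F (k1, k2) in uniformity. ser_norm v p (F k1) (F k2) < \<epsilon>"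
    by (rule eventually_mono) (auto intro: le_less_trans[OF assms(1)])
qed

theorem corollary4p17:
  fixes v :: "'k::field_char_0 \<Rightarrow> ereal" and \<pi> :: 'k
    and p a q n :: nat
    and \<sigma> :: "((nat \<Rightarrow> nat) \<Rightarrow> 'k) \<Rightarrow> ((nat \<Rightarrow> nat) \<Rightarrow> 'k)"
    and \<Theta> :: "'a::uniform_space \<Rightarrow> ((nat \<Rightarrow> nat) \<times> 'j::countable \<Rightarrow> 'k) \<Rightarrow> ((nat \<Rightarrow> nat) \<times> 'j \<Rightarrow> 'k)"
  assumes "dv_field v \<pi>"
    and "prime p" and "a \<ge> 1" and "q = p ^ a" and "residue_card v q"
    and "n \<ge> 1"
    and "frob_lift v \<pi> n q \<sigma>"
    and "\<forall>k. dwork_op v n \<sigma> (\<Theta> k)"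
    and "\<forall>k. nuclear v n (\<Theta> k)"
    and "\<forall>k. contracting v n q (\<Theta> k)"
    and "uniform_family v n q \<Theta>"
  shows "(\<forall>k. fred_exists v n (\<Theta> k)) \<and>
         unif_entire v (\<lambda>k. fred_coeff v n (\<Theta> k)) \<and>
         (unif_cont_ops v \<pi> p n \<Theta> \<longrightarrow>
            unif_cont_series v p (\<lambda>k. fred_coeff v n (\<Theta> k)) \<and>
            (\<forall>k1 k2. ser_norm v p (fred_coeff v n (\<Theta> k1)) (fred_coeff v n (\<Theta> k2))
                      \<le> op_norm v \<pi> p n (op_diff (\<Theta> k1) (\<Theta> k2))))"
proof -
  obtain b c c1 :: rat where "b > 0"
    and "\<forall>k. \<forall>f \<in> Mstar_bc v n (real_of_rat b) (real_of_rat c).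
      \<Theta> k f \<in> Mstar_bc v n (real q * real_of_rat b) (real_of_rat c + real_of_rat c1)"
    and "\<forall>u\<in>MI n. \<forall>w\<in>MI n. \<forall>N::int.
      finite {j1. \<exists>j2 k. v (gstar (\<Theta> k) (u, j1) (w, j2)) < ereal (of_int N)}"
    using assms(11) unfolding uniform_family_def by blast
  moreover have p_ge_2: "p \<ge> 2"
    using assms(2) by (rule prime_ge_2_nat)
  moreover have "real q > 1"
    using assms(3,4) p_ge_2 by simp
  ultimately interpret uniform_dwork_family v \<pi> \<Theta> n \<sigma> "real q" "real_of_rat b" "real_of_rat c" "real_of_rat c1"
    using assms(1,8) by unfold_locales auto
  have "\<forall>k1 k2. ser_norm v p (fred_coeff v n (\<Theta> k1)) (fred_coeff v n (\<Theta> k2))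
      \<le> op_norm v \<pi> p n (op_diff (\<Theta> k1) (\<Theta> k2))"
    using p_ge_2 by (intro allI ser_norm_fred_coeff_le) simp
  then show ?thesis
    using fred_exists unif_entire_fred_coeff
      unif_cont_series_if_ser_norm_le[of v p "\<lambda>k. fred_coeff v n (\<Theta> k)" \<pi> n \<Theta>]
    by blast
qed

end
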